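(* Under the hypotheses of the previous statement (small perturbation, of size $\varepsilon$, of Schwarzschild data with mass parameter $M$ prescribed on $\{r=2^{-l_0}\}$), there exist constants $C,c>0$ depending only on $M$ such that throughout the trapezoid region $T_0$, $$\Omega^{-2}(u,v)\le C\,r(u,v)^{1-c\varepsilon^2}.$$
   Context: The Einstein–scalar field system under spherical symmetry in double null coordinates, $g=-\Omega^2(u,v)\,du\,dv+r^2(u,v)(d\theta^2+\sin^2\theta\,d\varphi^2)$, with scalar field $\phi$, reads $r\partial_u\partial_v r=-\partial_ur\,\partial_vr-\frac14\Omega^2$, $r^2\partial_u\partial_v\log\Omega=\partial_ur\,\partial_vr+\frac14\Omega^2-r^2\partial_u\phi\,\partial_v\phi$, $r\partial_u\partial_v\phi=-\partial_ur\,\partial_v\phi-\partial_vr\,\partial_u\phi$, $\partial_u(\Omega^{-2}\partial_ur)=-r\Omega^{-2}(\partial_u\phi)^2$, $\partial_v(\Omega^{-2}\partial_vr)=-r\Omega^{-2}(\partial_v\phi)^2$. Fix $M>0$, $l_0$ large and $\varepsilon>0$ small. The trapezoid region $T_0$ is the open region in the trapped region bounded to the past by the spacelike curve $\{r=2^{-l_0}\}$, to the future by $\{r=0\}$, and on the sides by null segments $\{u=U\}$, $\{v=V\}$. The hypotheses are that on $\{r=2^{-l_0}\}$: $|\partial_vr+M/r|\le\varepsilon M/r$, $|\partial_ur+M/r|\le\varepsilon M/r$, $|\Omega^2-2M/r|\le\varepsilon M/r$, $|\partial_u\phi|\le\varepsilon/r^2$, $|\partial_v\phi|\le\varepsilon/r^2$.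 *)

theory Defs
  imports "HOL-Analysis.Analysis"
begin

definition du :: "(real \<times> real \<Rightarrow> real) \<Rightarrow> real \<times> real \<Rightarrow> real" where
  "du f p = deriv (\<lambda>s. f (s, snd p)) (fst p)"

definition dv :: "(real \<times> real \<Rightarrow> real) \<Rightarrow> real \<times> real \<Rightarrow> real" where
  "dv f p = deriv (\<lambda>s. f (fst p, s)) (snd p)"

definition C2_on :: "(real \<times> real) set \<Rightarrow> (real \<times> real \<Rightarrow> real) \<Rightarrow> bool" where
  "C2_on D f \<longleftrightarrow> f differentiable_on D \<and> du f differentiable_on D \<and> dv f differentiable_on D
     \<and> continuous_on D (du (du f)) \<and> continuous_on D (du (dv f))
     \<and> continuous_on D (dv (du f)) \<and> continuous_on D (dv (dv f))"

text \<open>Spherically symmetric Einstein--scalar field system in double null gauge,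
  g = -Omega^2 du dv + r^2 (round metric), on the open set D.\<close>
definition ES_solution ::
  "(real \<times> real) set \<Rightarrow> (real \<times> real \<Rightarrow> real) \<Rightarrow> (real \<times> real \<Rightarrow> real) \<Rightarrow> (real \<times> real \<Rightarrow> real) \<Rightarrow> bool"
where
  "ES_solution D r \<Omega> \<phi> \<longleftrightarrow> open D \<and> C2_on D r \<and> C2_on D \<Omega> \<and> C2_on D \<phi> \<and>
   (\<forall>p\<in>D. r p > 0 \<and> \<Omega> p > 0 \<and>
     r p * du (dv r) p = - du r p * dv r p - (\<Omega> p)\<^sup>2 / 4 \<and>
     (r p)\<^sup>2 * du (dv (\<lambda>q. ln (\<Omega> q))) p
        = du r p * dv r p + (\<Omega> p)\<^sup>2 / 4 - (r p)\<^sup>2 * du \<phi> p * dv \<phi> p \<and>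
     r p * du (dv \<phi>) p = - du r p * dv \<phi> p - dv r p * du \<phi> p \<and>
     du (\<lambda>q. du r q / (\<Omega> q)\<^sup>2) p = - r p * (du \<phi> p)\<^sup>2 / (\<Omega> p)\<^sup>2 \<and>
     dv (\<lambda>q. dv r q / (\<Omega> q)\<^sup>2) p = - r p * (dv \<phi> p)\<^sup>2 / (\<Omega> p)\<^sup>2)"

definition curve :: "(real \<times> real) set \<Rightarrow> (real \<times> real \<Rightarrow> real) \<Rightarrow> nat \<Rightarrow> real \<Rightarrow> real \<Rightarrow> (real \<times> real) set" where
  "curve D r l0 U V = {p \<in> D. fst p \<le> U \<and> snd p \<le> V \<and> r p = inverse (2 ^ l0)}"

text \<open>The open trapezoid region T0: to the future of {r = 2^{-l0}} (where r < 2^{-l0}),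
  up to {r = 0} (the edge of the domain, where r > 0), and bounded by u < U, v < V.\<close>
definition trapezoid :: "(real \<times> real) set \<Rightarrow> (real \<times> real \<Rightarrow> real) \<Rightarrow> nat \<Rightarrow> real \<Rightarrow> real \<Rightarrow> (real \<times> real) set" where
  "trapezoid D r l0 U V = {p \<in> D. fst p < U \<and> snd p < V \<and> r p < inverse (2 ^ l0)}"

text \<open>Geometric assumptions: T0 lies in the trapped region, and its past boundary is the curve:
  the past-directed null segments from every point of T0 stay in T0 until they hit the curve.\<close>
definition trapezoid_geometry :: "(real \<times> real) set \<Rightarrow> (real \<times> real \<Rightarrow> real) \<Rightarrow> nat \<Rightarrow> real \<Rightarrow> real \<Rightarrow> bool" where
  "trapezoid_geometry D r l0 U V \<longleftrightarrow>
    (\<forall>p\<in>trapezoid D r l0 U V. du r p < 0 \<and> dv r p < 0) \<and>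
    (\<forall>u v. (u, v) \<in> trapezoid D r l0 U V \<longrightarrow>
       (\<exists>u0 \<le> u. (u0, v) \<in> curve D r l0 U V \<and> (\<forall>s. u0 < s \<and> s \<le> u \<longrightarrow> (s, v) \<in> trapezoid D r l0 U V)) \<and>
       (\<exists>v0 \<le> v. (u, v0) \<in> curve D r l0 U V \<and> (\<forall>s. v0 < s \<and> s \<le> v \<longrightarrow> (u, s) \<in> trapezoid D r l0 U V)))"

definition near_schwarzschild_data ::
  "real \<Rightarrow> real \<Rightarrow> (real \<times> real) set \<Rightarrow> (real \<times> real \<Rightarrow> real) \<Rightarrow> (real \<times> real \<Rightarrow> real) \<Rightarrow> (real \<times> real \<Rightarrow> real) \<Rightarrow> bool"
where
  "near_schwarzschild_data M \<epsilon> \<Gamma> r \<Omega> \<phi> \<longleftrightarrow> (\<forall>p\<in>\<Gamma>.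
     \<bar>dv r p + M / r p\<bar> \<le> \<epsilon> * M / r p \<and>
     \<bar>du r p + M / r p\<bar> \<le> \<epsilon> * M / r p \<and>
     \<bar>(\<Omega> p)\<^sup>2 - 2 * M / r p\<bar> \<le> \<epsilon> * M / r p \<and>
     \<bar>du \<phi> p\<bar> \<le> \<epsilon> / (r p)\<^sup>2 \<and>
     \<bar>dv \<phi> p\<bar> \<le> \<epsilon> / (r p)\<^sup>2)"

end

theory Submission
  imports Defs
begin

text \<open>Write \<open>\<alpha> = r \<partial>\<^sub>u\<phi> / \<partial>\<^sub>u r\<close> and \<open>\<beta> = r \<partial>\<^sub>v\<phi> / \<partial>\<^sub>v r\<close>. The wave equation for \<open>\<phi>\<close> becomes a
  transport equation for \<open>\<alpha>\<close> in \<open>v\<close> and for \<open>\<beta>\<close> in \<open>u\<close>, and in the trapped region these obey a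
  maximum principle: \<open>|\<alpha>|, |\<beta>|\<close> never exceed the bound \<open>K = 2\<epsilon>/M\<close> they satisfy on the initial
  curve \<open>\<Gamma> = {r = r\<^sub>0}\<close>. The quantity \<open>W = r \<partial>\<^sub>ur \<partial>\<^sub>vr / \<Omega>\<^sup>2\<close> obeys
  \<open>\<partial>\<^sub>v W = -\<partial>\<^sub>vr/4 - (\<partial>\<^sub>vr/r) \<beta>\<^sup>2 W\<close>, so \<open>W r\<^bsup>K\<^sup>2\<^esup> + r/4\<close> decreases to the future and
  \<open>W \<lesssim> r\<^bsup>-K\<^sup>2\<^esup>\<close>. Finally \<open>r \<partial>\<^sub>ur\<close> and \<open>r \<partial>\<^sub>vr\<close> only decrease from their initial value \<open>\<approx> -M\<close>,
  so \<open>\<Omega>\<^sup>-\<^sup>2 = W r / ((r \<partial>\<^sub>ur)(r \<partial>\<^sub>vr)) \<lesssim> r\<^bsup>1 - K\<^sup>2\<^esup>\<close>.\<close>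

lemma has_real_derivative_du:
  assumes "open D" "f differentiable_on D" "(s, t) \<in> D"
  shows "((\<lambda>x. f (x, t)) has_real_derivative du f (s, t)) (at s)"
proof -
  have "f differentiable at (s, t)"
    using assms differentiable_on_eq_differentiable_at by blast
  then have "(\<lambda>x. f (x, t)) differentiable at s"
    using differentiable_compose[of f "\<lambda>x::real. (x, t)" s UNIV] by (auto intro: derivative_intros)
  then show ?thesis
    unfolding du_def using DERIV_deriv_iff_real_differentiable by auto
qed

lemma has_real_derivative_dv:
  assumes "open D" "f differentiable_on D" "(s, t) \<in> D"
  shows "((\<lambda>x. f (s, x)) has_real_derivative dv f (s, t)) (at t)"
proof -
  have "f differentiable at (s, t)"
    using assms differentiable_on_eq_differentiable_at by blast
  then have "(\<lambda>x. f (s, x)) differentiable at t"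
    using differentiable_compose[of f "\<lambda>x::real. (s, x)" t UNIV] by (auto intro: derivative_intros)
  then show ?thesis
    unfolding dv_def using DERIV_deriv_iff_real_differentiable by auto
qed

text \<open>Both sides are the mixed second difference of \<open>f\<close> over the square divided by \<open>h\<^sup>2\<close>,
  computed by the mean value theorem in the two possible orders.\<close>
lemma mixed_partials_agree_in_square:
  assumes D: "open D" and f: "f differentiable_on D"
    and duf: "du f differentiable_on D" and dvf: "dv f differentiable_on D"
    and h: "h > 0" and sq: "{a..a+h} \<times> {b..b+h} \<subseteq> D"
  obtains \<xi> \<eta> \<xi>' \<eta>' where "\<xi> \<in> {a..a+h}" "\<eta> \<in> {b..b+h}" "\<xi>' \<in> {a..a+h}" "\<eta>' \<in> {b..b+h}"
    "dv (du f) (\<xi>, \<eta>) = du (dv f) (\<xi>', \<eta>')"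
proof -
  have inD: "(x, y) \<in> D" if "a \<le> x" "x \<le> a+h" "b \<le> y" "y \<le> b+h" for x y
    using sq that by auto
  have der1: "((\<lambda>s. f (s, b+h) - f (s, b)) has_real_derivative du f (x, b+h) - du f (x, b)) (at x)"
    if "a \<le> x" "x \<le> a+h" for x
    using that h by (intro derivative_intros has_real_derivative_du[OF D f] inD) auto
  obtain \<xi> where \<xi>: "a < \<xi>" "\<xi> < a+h"
    "(f (a+h, b+h) - f (a+h, b)) - (f (a, b+h) - f (a, b)) = h * (du f (\<xi>, b+h) - du f (\<xi>, b))"
    using MVT2[of a "a+h" "\<lambda>s. f (s, b+h) - f (s, b)", OF _ der1] h by auto
  have der2: "((\<lambda>t. du f (\<xi>, t)) has_real_derivative dv (du f) (\<xi>, y)) (at y)"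
    if "b \<le> y" "y \<le> b+h" for y
    using that \<xi> by (intro has_real_derivative_dv[OF D duf] inD) auto
  obtain \<eta> where \<eta>: "b < \<eta>" "\<eta> < b+h" "du f (\<xi>, b+h) - du f (\<xi>, b) = h * dv (du f) (\<xi>, \<eta>)"
    using MVT2[of b "b+h" "\<lambda>t. du f (\<xi>, t)", OF _ der2] h by auto
  have der3: "((\<lambda>t. f (a+h, t) - f (a, t)) has_real_derivative dv f (a+h, y) - dv f (a, y)) (at y)"
    if "b \<le> y" "y \<le> b+h" for y
    using that h by (intro derivative_intros has_real_derivative_dv[OF D f] inD) auto
  obtain \<eta>' where \<eta>': "b < \<eta>'" "\<eta>' < b+h"
    "(f (a+h, b+h) - f (a, b+h)) - (f (a+h, b) - f (a, b)) = h * (dv f (a+h, \<eta>') - dv f (a, \<eta>'))"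
    using MVT2[of b "b+h" "\<lambda>t. f (a+h, t) - f (a, t)", OF _ der3] h by auto
  have der4: "((\<lambda>s. dv f (s, \<eta>')) has_real_derivative du (dv f) (x, \<eta>')) (at x)"
    if "a \<le> x" "x \<le> a+h" for x
    using that \<eta>' by (intro has_real_derivative_du[OF D dvf] inD) auto
  obtain \<xi>' where \<xi>': "a < \<xi>'" "\<xi>' < a+h" "dv f (a+h, \<eta>') - dv f (a, \<eta>') = h * du (dv f) (\<xi>', \<eta>')"
    using MVT2[of a "a+h" "\<lambda>s. dv f (s, \<eta>')", OF _ der4] h by auto
  have "h * h * dv (du f) (\<xi>, \<eta>) = h * h * du (dv f) (\<xi>', \<eta>')"
    using \<xi>(3) \<eta>(3) \<eta>'(3) \<xi>'(3) by (auto simp: algebra_simps)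
  then have eq: "dv (du f) (\<xi>, \<eta>) = du (dv f) (\<xi>', \<eta>')"
    using h by simp
  show ?thesis
    by (rule that[OF _ _ _ _ eq]) (use \<xi> \<eta> \<xi>' \<eta>' in auto)
qed

lemma du_dv_commute:
  assumes D: "open D" and f: "C2_on D f" and p: "p \<in> D"
  shows "dv (du f) p = du (dv f) p"
proof (rule ccontr)
  assume ne: "dv (du f) p \<noteq> du (dv f) p"
  define e where "e = \<bar>dv (du f) p - du (dv f) p\<bar> / 2"
  have e: "e > 0" using ne unfolding e_def by auto
  have "isCont (dv (du f)) p" "isCont (du (dv f)) p"
    using f D p continuous_on_eq_continuous_at unfolding C2_on_def by blast+
  then obtain d1 d2 where d1: "d1 > 0" "\<And>x. dist x p < d1 \<Longrightarrow> dist (dv (du f) x) (dv (du f) p) < e"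
    and d2: "d2 > 0" "\<And>x. dist x p < d2 \<Longrightarrow> dist (du (dv f) x) (du (dv f) p) < e"
    using e unfolding continuous_at_eps_delta by blast
  obtain d3 where d3: "d3 > 0" "ball p d3 \<subseteq> D" using D p open_contains_ball by blast
  define d where "d = min d1 (min d2 d3)"
  have d: "d > 0" using d1 d2 d3 by (simp add: d_def)
  obtain a b where pab: "p = (a, b)" by (cases p)
  have near: "dist z p < d" if z_sq: "z \<in> {a..a + d/3} \<times> {b..b + d/3}" for z
  proof -
    obtain x y where z: "z = (x, y)" "a \<le> x" "x \<le> a + d/3" "b \<le> y" "y \<le> b + d/3"
      using z_sq by (cases z) auto
    have "dist z p = sqrt ((x - a)\<^sup>2 + (y - b)\<^sup>2)"
      by (simp add: z pab dist_Pair_Pair dist_real_def)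
    also have "\<dots> \<le> \<bar>x - a\<bar> + \<bar>y - b\<bar>" by (rule sqrt_sum_squares_le_sum_abs)
    also have "\<dots> < d" using z d by auto
    finally show ?thesis .
  qed
  have sq: "{a..a + d/3} \<times> {b..b + d/3} \<subseteq> D"
  proof
    fix z assume "z \<in> {a..a + d/3} \<times> {b..b + d/3}"
    then have "dist z p < d" by (rule near)
    then have "z \<in> ball p d3" by (simp add: d_def dist_commute)
    then show "z \<in> D" using d3 by blast
  qed
  have diff: "f differentiable_on D" "du f differentiable_on D" "dv f differentiable_on D"
    using f unfolding C2_on_def by auto
  obtain \<xi> \<eta> \<xi>' \<eta>' where pts: "\<xi> \<in> {a..a + d/3}" "\<eta> \<in> {b..b + d/3}"
    "\<xi>' \<in> {a..a + d/3}" "\<eta>' \<in> {b..b + d/3}" and eq: "dv (du f) (\<xi>, \<eta>) = du (dv f) (\<xi>', \<eta>')"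
    by (rule mixed_partials_agree_in_square[OF D diff _ sq]) (use d in simp)
  have "dist (\<xi>, \<eta>) p < d" "dist (\<xi>', \<eta>') p < d" using near pts by auto
  then have "\<bar>dv (du f) (\<xi>, \<eta>) - dv (du f) p\<bar> < e" "\<bar>du (dv f) (\<xi>', \<eta>') - du (dv f) p\<bar> < e"
    using d1(2) d2(2) unfolding d_def dist_real_def by auto
  then show False using eq unfolding e_def by (auto simp: abs_if split: if_splits)
qed

lemma abs_increases_to_the_left:
  fixes f :: "real \<Rightarrow> real"
  assumes f': "(f has_real_derivative c * (f x * (1 + k) - b)) (at x)"
    and c: "c < 0" and k: "k > 0" and b: "\<bar>b\<bar> \<le> \<bar>f x\<bar>" and fx: "f x \<noteq> 0" and \<delta>: "\<delta> > 0"
  shows "\<exists>h. 0 < h \<and> h < \<delta> \<and> \<bar>f x\<bar> < \<bar>f (x - h)\<bar>"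
proof (cases "f x > 0")
  case True
  moreover have "k * f x > 0" using k True by simp
  ultimately have "f x * (1 + k) - b > 0" using b by (simp add: algebra_simps)
  then have "c * (f x * (1 + k) - b) < 0" using c by (simp add: mult_neg_pos)
  then obtain d where d: "d > 0" "\<And>h. 0 < h \<Longrightarrow> h < d \<Longrightarrow> f x < f (x - h)"
    using DERIV_neg_dec_left[OF f'] by blast
  have "f x < f (x - min d \<delta> / 2)" using d \<delta> by auto
  then show ?thesis
    using d(1) \<delta> True by (intro exI[of _ "min d \<delta> / 2"]) auto
next
  case False
  then have "f x < 0" using fx by simp
  moreover have "k * f x < 0" using k \<open>f x < 0\<close> by (simp add: mult_pos_neg)
  ultimately have "f x * (1 + k) - b < 0" using b by (simp add: algebra_simps)
  then have "c * (f x * (1 + k) - b) > 0" using c by (simp add: mult_neg_neg)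
  then obtain d where d: "d > 0" "\<And>h. 0 < h \<Longrightarrow> h < d \<Longrightarrow> f (x - h) < f x"
    using DERIV_pos_inc_left[OF f'] by blast
  have "f (x - min d \<delta> / 2) < f x" using d \<delta> by auto
  then show ?thesis
    using d(1) \<delta> False fx by (intro exI[of _ "min d \<delta> / 2"]) auto
qed

locale near_schwarzschild_trapezoid =
  fixes M \<epsilon> :: real and l0 :: nat and D :: "(real \<times> real) set"
    and r \<Omega> \<phi> :: "real \<times> real \<Rightarrow> real" and U V :: real
  assumes M_pos: "M > 0" and \<epsilon>_pos: "0 < \<epsilon>" and \<epsilon>_small: "\<epsilon> \<le> 1/10"
    and ES: "ES_solution D r \<Omega> \<phi>" and geometry: "trapezoid_geometry D r l0 U V"
    and data: "near_schwarzschild_data M \<epsilon> (curve D r l0 U V) r \<Omega> \<phi>"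
begin

abbreviation "T \<equiv> trapezoid D r l0 U V"
abbreviation "\<Gamma> \<equiv> curve D r l0 U V"
abbreviation "r\<^sub>0 \<equiv> inverse ((2::real) ^ l0)"

lemma r\<^sub>0_pos: "0 < r\<^sub>0" and r\<^sub>0_le_1: "r\<^sub>0 \<le> 1"
  using one_le_power[of "2::real" l0] by (auto simp: inverse_le_1_iff)

lemma open_D: "open D" and C2_r: "C2_on D r" and C2_\<Omega>: "C2_on D \<Omega>" and C2_\<phi>: "C2_on D \<phi>"
  using ES unfolding ES_solution_def by auto

lemma r_pos: "p \<in> D \<Longrightarrow> r p > 0" and \<Omega>_pos: "p \<in> D \<Longrightarrow> \<Omega> p > 0"
  using ES unfolding ES_solution_def by auto

lemma wave_r: "p \<in> D \<Longrightarrow> r p * du (dv r) p = - du r p * dv r p - (\<Omega> p)\<^sup>2 / 4"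
  and wave_\<phi>: "p \<in> D \<Longrightarrow> r p * du (dv \<phi>) p = - du r p * dv \<phi> p - dv r p * du \<phi> p"
  and raychaudhuri_v: "p \<in> D \<Longrightarrow> dv (\<lambda>q. dv r q / (\<Omega> q)\<^sup>2) p = - r p * (dv \<phi> p)\<^sup>2 / (\<Omega> p)\<^sup>2"
  using ES unfolding ES_solution_def by auto

lemma mem_D: "p \<in> T \<union> \<Gamma> \<Longrightarrow> p \<in> D"
  and r_le_r\<^sub>0: "p \<in> T \<union> \<Gamma> \<Longrightarrow> r p \<le> r\<^sub>0"
  and r_on_\<Gamma>: "p \<in> \<Gamma> \<Longrightarrow> r p = r\<^sub>0"
  and r_on_T: "p \<in> T \<Longrightarrow> r p < r\<^sub>0"
  unfolding trapezoid_def curve_def by auto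

lemma data_on_\<Gamma>:
  assumes "p \<in> \<Gamma>"
  shows "\<bar>du r p + M / r\<^sub>0\<bar> \<le> \<epsilon> * (M / r\<^sub>0)" "\<bar>dv r p + M / r\<^sub>0\<bar> \<le> \<epsilon> * (M / r\<^sub>0)"
    "\<bar>(\<Omega> p)\<^sup>2 - 2 * (M / r\<^sub>0)\<bar> \<le> \<epsilon> * (M / r\<^sub>0)"
    "\<bar>du \<phi> p\<bar> \<le> \<epsilon> / r\<^sub>0\<^sup>2" "\<bar>dv \<phi> p\<bar> \<le> \<epsilon> / r\<^sub>0\<^sup>2"
  using bspec[OF data[unfolded near_schwarzschild_data_def] assms] r_on_\<Gamma>[OF assms] by simp_all

lemma du_r_on_\<Gamma>: "p \<in> \<Gamma> \<Longrightarrow> - (1 + \<epsilon>) * (M / r\<^sub>0) \<le> du r p \<and> du r p \<le> - (1 - \<epsilon>) * (M / r\<^sub>0)"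
  and dv_r_on_\<Gamma>: "p \<in> \<Gamma> \<Longrightarrow> - (1 + \<epsilon>) * (M / r\<^sub>0) \<le> dv r p \<and> dv r p \<le> - (1 - \<epsilon>) * (M / r\<^sub>0)"
  and \<Omega>_on_\<Gamma>: "p \<in> \<Gamma> \<Longrightarrow> (2 - \<epsilon>) * (M / r\<^sub>0) \<le> (\<Omega> p)\<^sup>2"
  using data_on_\<Gamma>(1-3)[of p] unfolding abs_le_iff
  by (auto simp: algebra_simps add_divide_distrib diff_divide_distrib)

lemma du_dv_r_neg:
  assumes "p \<in> T \<union> \<Gamma>"
  shows "du r p < 0 \<and> dv r p < 0"
proof (cases "p \<in> T")
  case True
  then show ?thesis using geometry unfolding trapezoid_geometry_def by blast
next
  case False
  then have "p \<in> \<Gamma>" using assms by blast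
  moreover have "(1 - \<epsilon>) * (M / r\<^sub>0) > 0" using M_pos \<epsilon>_small r\<^sub>0_pos by auto
  ultimately show ?thesis using du_r_on_\<Gamma>[of p] dv_r_on_\<Gamma>[of p] by linarith
qed

lemma dv_r_neg: "p \<in> T \<union> \<Gamma> \<Longrightarrow> dv r p < 0"
  using du_dv_r_neg by blast

lemma past_u_segment:
  assumes "(u, v) \<in> T \<union> \<Gamma>"
  obtains u0 where "u0 \<le> u" "(u0, v) \<in> \<Gamma>" "\<And>s. u0 \<le> s \<Longrightarrow> s \<le> u \<Longrightarrow> (s, v) \<in> T \<union> \<Gamma>"
proof (cases "(u, v) \<in> T")
  case True
  then obtain u0 where "u0 \<le> u" "(u0, v) \<in> \<Gamma>" "\<forall>s. u0 < s \<and> s \<le> u \<longrightarrow> (s, v) \<in> T"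
    using geometry unfolding trapezoid_geometry_def by blast
  then show ?thesis using that by (metis UnI1 UnI2 order_le_less)
next
  case False
  then show ?thesis using that[of u] assms by auto
qed

lemma past_v_segment:
  assumes "(u, v) \<in> T \<union> \<Gamma>"
  obtains v0 where "v0 \<le> v" "(u, v0) \<in> \<Gamma>" "\<And>t. v0 \<le> t \<Longrightarrow> t \<le> v \<Longrightarrow> (u, t) \<in> T \<union> \<Gamma>"
proof (cases "(u, v) \<in> T")
  case True
  then obtain v0 where "v0 \<le> v" "(u, v0) \<in> \<Gamma>" "\<forall>t. v0 < t \<and> t \<le> v \<longrightarrow> (u, t) \<in> T"
    using geometry unfolding trapezoid_geometry_def by blast
  then show ?thesis using that by (metis UnI1 UnI2 order_le_less)
next
  case False
  then show ?thesis using that[of v] assms by auto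
qed

lemma differentiable_r: "r differentiable_on D"
  and differentiable_du_r: "du r differentiable_on D"
  and differentiable_dv_r: "dv r differentiable_on D"
  and differentiable_du_\<phi>: "du \<phi> differentiable_on D"
  and differentiable_dv_\<phi>: "dv \<phi> differentiable_on D"
  using C2_r C2_\<phi> unfolding C2_on_def by auto

lemma differentiable_dv_r_div_\<Omega>_sq: "(\<lambda>q. dv r q / (\<Omega> q)\<^sup>2) differentiable_on D"
  using differentiable_dv_r C2_\<Omega> \<Omega>_pos
  unfolding C2_on_def differentiable_on_def by (fastforce intro!: derivative_intros)

lemma deriv_r_u: "(s, t) \<in> D \<Longrightarrow> ((\<lambda>x. r (x, t)) has_real_derivative du r (s, t)) (at s)"
  by (rule has_real_derivative_du[OF open_D differentiable_r])

lemma deriv_r_v: "(s, t) \<in> D \<Longrightarrow> ((\<lambda>y. r (s, y)) has_real_derivative dv r (s, t)) (at t)"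
  by (rule has_real_derivative_dv[OF open_D differentiable_r])

lemma deriv_dv_r_u: "(s, t) \<in> D \<Longrightarrow> ((\<lambda>x. dv r (x, t)) has_real_derivative du (dv r) (s, t)) (at s)"
  by (rule has_real_derivative_du[OF open_D differentiable_dv_r])

lemma deriv_du_r_v: "(s, t) \<in> D \<Longrightarrow> ((\<lambda>y. du r (s, y)) has_real_derivative du (dv r) (s, t)) (at t)"
  using has_real_derivative_dv[OF open_D differentiable_du_r] du_dv_commute[OF open_D C2_r] by metis

lemma deriv_dv_\<phi>_u: "(s, t) \<in> D \<Longrightarrow> ((\<lambda>x. dv \<phi> (x, t)) has_real_derivative du (dv \<phi>) (s, t)) (at s)"
  by (rule has_real_derivative_du[OF open_D differentiable_dv_\<phi>])

lemma deriv_du_\<phi>_v: "(s, t) \<in> D \<Longrightarrow> ((\<lambda>y. du \<phi> (s, y)) has_real_derivative du (dv \<phi>) (s, t)) (at t)"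
  using has_real_derivative_dv[OF open_D differentiable_du_\<phi>] du_dv_commute[OF open_D C2_\<phi>] by metis

lemma deriv_dv_r_div_\<Omega>_sq_v: "(s, t) \<in> D \<Longrightarrow>
  ((\<lambda>y. dv r (s, y) / (\<Omega> (s, y))\<^sup>2) has_real_derivative - r (s, t) * (dv \<phi> (s, t))\<^sup>2 / (\<Omega> (s, t))\<^sup>2) (at t)"
  using has_real_derivative_dv[OF open_D differentiable_dv_r_div_\<Omega>_sq, of s t] raychaudhuri_v[of "(s, t)"]
  by simp

text \<open>By the wave equation for \<open>r\<close>, \<open>\<partial>\<^sub>u (r \<partial>\<^sub>v r) = -\<Omega>\<^sup>2/4 \<le> 0\<close>, so \<open>r \<partial>\<^sub>v r\<close> only decreases
  towards the future from its Schwarzschild value \<open>-M\<close> on \<open>\<Gamma>\<close>; likewise for \<open>r \<partial>\<^sub>u r\<close>.\<close>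
lemma r_dv_r_le: "p \<in> T \<union> \<Gamma> \<Longrightarrow> r p * dv r p \<le> - (1 - \<epsilon>) * M"
proof -
  assume p: "p \<in> T \<union> \<Gamma>"
  obtain u v where puv: "p = (u, v)" by (cases p)
  obtain u0 where u0: "u0 \<le> u" "(u0, v) \<in> \<Gamma>" "\<And>s. u0 \<le> s \<Longrightarrow> s \<le> u \<Longrightarrow> (s, v) \<in> T \<union> \<Gamma>"
    using past_u_segment p puv by metis
  have "r (u, v) * dv r (u, v) \<le> r (u0, v) * dv r (u0, v)"
  proof (rule DERIV_nonpos_imp_nonincreasing[OF u0(1), where f = "\<lambda>x. r (x, v) * dv r (x, v)"])
    fix x assume "u0 \<le> x" "x \<le> u"
    then have xD: "(x, v) \<in> D" using u0(3) mem_D by blast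
    have "((\<lambda>x. r (x, v) * dv r (x, v)) has_real_derivative - (\<Omega> (x, v))\<^sup>2 / 4) (at x)"
      using DERIV_mult[OF deriv_r_u[OF xD] deriv_dv_r_u[OF xD]] wave_r[OF xD]
      by (simp add: algebra_simps)
    then show "\<exists>y. ((\<lambda>x. r (x, v) * dv r (x, v)) has_real_derivative y) (at x) \<and> y \<le> 0"
      by fastforce
  qed
  also have "\<dots> \<le> r\<^sub>0 * (- (1 - \<epsilon>) * (M / r\<^sub>0))"
    unfolding r_on_\<Gamma>[OF u0(2)] using dv_r_on_\<Gamma>[OF u0(2)] r\<^sub>0_pos by (intro mult_left_mono) auto
  finally show ?thesis using puv r\<^sub>0_pos by simp
qed

lemma r_du_r_le: "p \<in> T \<union> \<Gamma> \<Longrightarrow> r p * du r p \<le> - (1 - \<epsilon>) * M"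
proof -
  assume p: "p \<in> T \<union> \<Gamma>"
  obtain u v where puv: "p = (u, v)" by (cases p)
  obtain v0 where v0: "v0 \<le> v" "(u, v0) \<in> \<Gamma>" "\<And>t. v0 \<le> t \<Longrightarrow> t \<le> v \<Longrightarrow> (u, t) \<in> T \<union> \<Gamma>"
    using past_v_segment p puv by metis
  have "r (u, v) * du r (u, v) \<le> r (u, v0) * du r (u, v0)"
  proof (rule DERIV_nonpos_imp_nonincreasing[OF v0(1), where f = "\<lambda>y. r (u, y) * du r (u, y)"])
    fix y assume "v0 \<le> y" "y \<le> v"
    then have yD: "(u, y) \<in> D" using v0(3) mem_D by blast
    have "((\<lambda>y. r (u, y) * du r (u, y)) has_real_derivative - (\<Omega> (u, y))\<^sup>2 / 4) (at y)"
      using DERIV_mult[OF deriv_r_v[OF yD] deriv_du_r_v[OF yD]] wave_r[OF yD]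
      by (simp add: algebra_simps)
    then show "\<exists>z. ((\<lambda>y. r (u, y) * du r (u, y)) has_real_derivative z) (at y) \<and> z \<le> 0"
      by fastforce
  qed
  also have "\<dots> \<le> r\<^sub>0 * (- (1 - \<epsilon>) * (M / r\<^sub>0))"
    unfolding r_on_\<Gamma>[OF v0(2)] using du_r_on_\<Gamma>[OF v0(2)] r\<^sub>0_pos by (intro mult_left_mono) auto
  finally show ?thesis using puv r\<^sub>0_pos by simp
qed

lemma dv_r_le: "p \<in> T \<union> \<Gamma> \<Longrightarrow> dv r p \<le> - (1 - \<epsilon>) * (M / r\<^sub>0)"
proof -
  assume p: "p \<in> T \<union> \<Gamma>"
  have rp: "0 < r p" "r p \<le> r\<^sub>0" using r_pos[OF mem_D[OF p]] r_le_r\<^sub>0[OF p] by auto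
  have "(1 - \<epsilon>) * (M / r\<^sub>0) \<le> (1 - \<epsilon>) * (M / r p)"
    using rp \<epsilon>_small M_pos by (intro mult_left_mono divide_left_mono) auto
  moreover have "dv r p \<le> - (1 - \<epsilon>) * (M / r p)"
    using r_dv_r_le[OF p] rp by (simp add: le_divide_eq mult.commute)
  ultimately show ?thesis by linarith
qed

definition \<alpha> :: "real \<times> real \<Rightarrow> real" where "\<alpha> p = r p * du \<phi> p / du r p"
definition \<beta> :: "real \<times> real \<Rightarrow> real" where "\<beta> p = r p * dv \<phi> p / dv r p"

text \<open>\<open>W = m/2 - r/4\<close> for the Hawking mass \<open>m\<close>, since \<open>1 - 2m/r = -4 \<Omega>\<^sup>-\<^sup>2 \<partial>\<^sub>u r \<partial>\<^sub>v r\<close>.\<close>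
definition W :: "real \<times> real \<Rightarrow> real" where "W p = r p * du r p * (dv r p / (\<Omega> p)\<^sup>2)"

definition K :: real where "K = 2 * \<epsilon> / M"

lemma \<alpha>_transport:
  assumes p: "(s, t) \<in> T \<union> \<Gamma>"
  shows "((\<lambda>y. \<alpha> (s, y)) has_real_derivative dv r (s, t) / r (s, t) *
    (\<alpha> (s, t) * (1 + (\<Omega> (s, t))\<^sup>2 / (4 * du r (s, t) * dv r (s, t))) - \<beta> (s, t))) (at t)"
proof -
  have pD: "(s, t) \<in> D" using mem_D[OF p] .
  have ne: "r (s, t) \<noteq> 0" "du r (s, t) \<noteq> 0" "dv r (s, t) \<noteq> 0"
    using r_pos[OF pD] du_dv_r_neg[OF p] by auto
  have X: "du (dv r) (s, t) = (- du r (s, t) * dv r (s, t) - (\<Omega> (s, t))\<^sup>2 / 4) / r (s, t)"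
    and Y: "du (dv \<phi>) (s, t) = (- du r (s, t) * dv \<phi> (s, t) - dv r (s, t) * du \<phi> (s, t)) / r (s, t)"
    using wave_r[OF pD] wave_\<phi>[OF pD] ne by (simp_all add: field_simps)
  show ?thesis unfolding \<alpha>_def
    by (rule DERIV_cong[OF DERIV_divide[OF DERIV_mult[OF deriv_r_v[OF pD] deriv_du_\<phi>_v[OF pD]]
          deriv_du_r_v[OF pD]]])
      (use ne in \<open>simp_all add: X Y \<beta>_def field_simps power2_eq_square\<close>)
qed

lemma \<beta>_transport:
  assumes p: "(s, t) \<in> T \<union> \<Gamma>"
  shows "((\<lambda>x. \<beta> (x, t)) has_real_derivative du r (s, t) / r (s, t) *
    (\<beta> (s, t) * (1 + (\<Omega> (s, t))\<^sup>2 / (4 * du r (s, t) * dv r (s, t))) - \<alpha> (s, t))) (at s)"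
proof -
  have pD: "(s, t) \<in> D" using mem_D[OF p] .
  have ne: "r (s, t) \<noteq> 0" "du r (s, t) \<noteq> 0" "dv r (s, t) \<noteq> 0"
    using r_pos[OF pD] du_dv_r_neg[OF p] by auto
  have X: "du (dv r) (s, t) = (- du r (s, t) * dv r (s, t) - (\<Omega> (s, t))\<^sup>2 / 4) / r (s, t)"
    and Y: "du (dv \<phi>) (s, t) = (- du r (s, t) * dv \<phi> (s, t) - dv r (s, t) * du \<phi> (s, t)) / r (s, t)"
    using wave_r[OF pD] wave_\<phi>[OF pD] ne by (simp_all add: field_simps)
  show ?thesis unfolding \<beta>_def
    by (rule DERIV_cong[OF DERIV_divide[OF DERIV_mult[OF deriv_r_u[OF pD] deriv_dv_\<phi>_u[OF pD]]
          deriv_dv_r_u[OF pD]]])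
      (use ne in \<open>simp_all add: X Y \<alpha>_def field_simps power2_eq_square\<close>)
qed

lemma W_transport:
  assumes p: "(s, t) \<in> T \<union> \<Gamma>"
  shows "((\<lambda>y. W (s, y)) has_real_derivative
    - dv r (s, t) / 4 - dv r (s, t) / r (s, t) * (\<beta> (s, t))\<^sup>2 * W (s, t)) (at t)"
proof -
  have pD: "(s, t) \<in> D" using mem_D[OF p] .
  have ne: "r (s, t) \<noteq> 0" "du r (s, t) \<noteq> 0" "dv r (s, t) \<noteq> 0" "\<Omega> (s, t) \<noteq> 0"
    using r_pos[OF pD] \<Omega>_pos[OF pD] du_dv_r_neg[OF p] by auto
  have X: "du (dv r) (s, t) = (- du r (s, t) * dv r (s, t) - (\<Omega> (s, t))\<^sup>2 / 4) / r (s, t)"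
    using wave_r[OF pD] ne by (simp add: field_simps)
  show ?thesis unfolding W_def
    by (rule DERIV_cong[OF DERIV_mult[OF DERIV_mult[OF deriv_r_v[OF pD] deriv_du_r_v[OF pD]]
          deriv_dv_r_div_\<Omega>_sq_v[OF pD]]])
      (use ne in \<open>simp add: X \<beta>_def W_def field_simps power2_eq_square\<close>)
qed

lemma \<alpha>_\<beta>_on_\<Gamma>:
  assumes p: "p \<in> \<Gamma>"
  shows "\<bar>\<alpha> p\<bar> \<le> K \<and> \<bar>\<beta> p\<bar> \<le> K"
proof -
  have frac: "r\<^sub>0 * \<bar>x\<bar> / \<bar>y\<bar> \<le> K" if "\<bar>x\<bar> \<le> \<epsilon> / r\<^sub>0\<^sup>2" "y \<le> - (1 - \<epsilon>) * (M / r\<^sub>0)" for x y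
  proof -
    have "M / (2 * r\<^sub>0) \<le> (1 - \<epsilon>) * (M / r\<^sub>0)" using \<epsilon>_small M_pos r\<^sub>0_pos by (simp add: field_simps)
    then have "M / (2 * r\<^sub>0) \<le> \<bar>y\<bar>" using that(2) by linarith
    then have "r\<^sub>0 * \<bar>x\<bar> / \<bar>y\<bar> \<le> r\<^sub>0 * (\<epsilon> / r\<^sub>0\<^sup>2) / (M / (2 * r\<^sub>0))"
      using that(1) r\<^sub>0_pos M_pos \<epsilon>_pos by (intro frac_le mult_left_mono) auto
    also have "\<dots> = K" using r\<^sub>0_pos M_pos by (simp add: K_def field_simps power2_eq_square)
    finally show ?thesis .
  qed
  show ?thesis
    using frac[OF data_on_\<Gamma>(4)[OF p] conjunct2[OF du_r_on_\<Gamma>[OF p]]]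
      frac[OF data_on_\<Gamma>(5)[OF p] conjunct2[OF dv_r_on_\<Gamma>[OF p]]]
    unfolding \<alpha>_def \<beta>_def r_on_\<Gamma>[OF p] using r\<^sub>0_pos by (simp add: abs_mult abs_divide)
qed

lemma W_pos: assumes p: "p \<in> T \<union> \<Gamma>" shows "W p > 0"
  unfolding W_def using r_pos[OF mem_D[OF p]] \<Omega>_pos[OF mem_D[OF p]] du_dv_r_neg[OF p]
  by (intro mult_neg_neg mult_pos_neg divide_neg_pos) auto

lemma W_on_\<Gamma>_le: assumes p: "p \<in> \<Gamma>" shows "W p \<le> M"
proof -
  have pT\<Gamma>: "p \<in> T \<union> \<Gamma>" using p by blast
  define A where "A = (1 + \<epsilon>) * (M / r\<^sub>0)"
  have "- du r p \<le> A" "- dv r p \<le> A"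
    using du_r_on_\<Gamma>[OF p] dv_r_on_\<Gamma>[OF p] unfolding A_def by linarith+
  then have "(- du r p) * (- dv r p) \<le> A * A"
    using du_dv_r_neg[OF pT\<Gamma>] by (intro mult_mono) auto
  then have num: "r\<^sub>0 * (du r p * dv r p) \<le> r\<^sub>0 * (A * A)"
    using r\<^sub>0_pos by (intro mult_left_mono) auto
  have "W p = r\<^sub>0 * (du r p * dv r p) / (\<Omega> p)\<^sup>2"
    unfolding W_def r_on_\<Gamma>[OF p] by simp
  also have "\<dots> \<le> r\<^sub>0 * (A * A) / ((2 - \<epsilon>) * (M / r\<^sub>0))"
    by (rule frac_le) (use num \<Omega>_on_\<Gamma>[OF p] \<epsilon>_small M_pos r\<^sub>0_pos in auto)
  also have "\<dots> = (1 + \<epsilon>)\<^sup>2 / (2 - \<epsilon>) * M" using r\<^sub>0_pos M_pos \<epsilon>_small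
    by (simp add: A_def field_simps power2_eq_square)
  also have "\<dots> \<le> M"
  proof -
    have "\<epsilon> * \<epsilon> \<le> \<epsilon>" using \<epsilon>_pos \<epsilon>_small by (simp add: mult_le_cancel_left1)
    then have "(1 + \<epsilon>)\<^sup>2 \<le> 2 - \<epsilon>" using \<epsilon>_small by (simp add: power2_eq_square algebra_simps)
    then show ?thesis using M_pos \<epsilon>_small by (simp add: divide_le_eq)
  qed
  finally show ?thesis .
qed

lemma open_T: "open T"
proof -
  have "T = (D \<inter> r -` {..<r\<^sub>0}) \<inter> ({x. fst x < U} \<inter> {x. snd x < V})"
    unfolding trapezoid_def by auto
  moreover have "open (D \<inter> r -` {..<r\<^sub>0})"
    using continuous_open_preimage[OF differentiable_imp_continuous_on[OF differentiable_r] open_D] by auto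
  moreover have "open {x::real \<times> real. fst x < U}" "open {x::real \<times> real. snd x < V}"
    by (auto intro!: open_Collect_less continuous_intros)
  ultimately show ?thesis by auto
qed

lemma continuous_on_\<alpha>: "continuous_on (T \<union> \<Gamma>) \<alpha>" and continuous_on_\<beta>: "continuous_on (T \<union> \<Gamma>) \<beta>"
proof -
  have sub: "T \<union> \<Gamma> \<subseteq> D" using mem_D by blast
  have "continuous_on (T \<union> \<Gamma>) r" "continuous_on (T \<union> \<Gamma>) (du r)" "continuous_on (T \<union> \<Gamma>) (dv r)"
    "continuous_on (T \<union> \<Gamma>) (du \<phi>)" "continuous_on (T \<union> \<Gamma>) (dv \<phi>)"
    using continuous_on_subset[OF differentiable_imp_continuous_on sub] differentiable_r
      differentiable_du_r differentiable_dv_r differentiable_du_\<phi> differentiable_dv_\<phi> by auto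
  moreover have "du r p \<noteq> 0" "dv r p \<noteq> 0" if "p \<in> T \<union> \<Gamma>" for p
    using du_dv_r_neg[OF that] by auto
  ultimately show "continuous_on (T \<union> \<Gamma>) \<alpha>" "continuous_on (T \<union> \<Gamma>) \<beta>" unfolding \<alpha>_def \<beta>_def
    by (auto intro!: continuous_intros)
qed

lemma r_antimono_v:
  assumes "t \<le> t'" "\<And>y. t \<le> y \<Longrightarrow> y \<le> t' \<Longrightarrow> (s, y) \<in> T \<union> \<Gamma>"
  shows "r (s, t') \<le> r (s, t)"
proof (rule DERIV_nonpos_imp_nonincreasing[OF assms(1), where f = "\<lambda>y. r (s, y)"])
  fix y assume "t \<le> y" "y \<le> t'"
  then have "(s, y) \<in> T \<union> \<Gamma>" using assms(2) by blast
  then show "\<exists>z. ((\<lambda>y. r (s, y)) has_real_derivative z) (at y) \<and> z \<le> 0"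
    using deriv_r_v[OF mem_D] du_dv_r_neg by (meson less_imp_le)
qed

lemma r_gt_r\<^sub>0_below_\<Gamma>:
  assumes \<Gamma>: "(s, v0) \<in> \<Gamma>" and t: "t < v0"
  obtains \<tau> where "t < \<tau>" "\<tau> < v0" "(s, \<tau>) \<in> D" "r\<^sub>0 < r (s, \<tau>)"
proof -
  have D: "(s, v0) \<in> D" using mem_D \<Gamma> by blast
  obtain d where d: "d > 0" "\<And>h. 0 < h \<Longrightarrow> h < d \<Longrightarrow> r (s, v0) < r (s, v0 - h)"
    using DERIV_neg_dec_left[OF deriv_r_v[OF D]] dv_r_neg \<Gamma> by blast
  obtain \<delta> where \<delta>: "\<delta> > 0" "ball (s, v0) \<delta> \<subseteq> D" using open_D D open_contains_ball by blast
  define h where "h = min d (min \<delta> (v0 - t)) / 2"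
  have h: "0 < h" "h < d" "h < \<delta>" "h < v0 - t" using d \<delta> t unfolding h_def by auto
  have "(s, v0 - h) \<in> D" using \<delta>(2) h by (auto simp: dist_Pair_Pair dist_real_def)
  moreover have "r\<^sub>0 < r (s, v0 - h)" using d(2)[OF h(1,2)] r_on_\<Gamma>[OF \<Gamma>] by simp
  ultimately show ?thesis using that[of "v0 - h"] h by simp
qed

definition past_region :: "real \<Rightarrow> real \<Rightarrow> real \<Rightarrow> (real \<times> real) set" where
  "past_region u0 u v = {(s, t). u0 \<le> s \<and> s \<le> u \<and> t \<le> v \<and> (\<forall>y. t \<le> y \<and> y \<le> v \<longrightarrow> (s, y) \<in> T \<union> \<Gamma>)}"

lemma past_region_subset: "past_region u0 u v \<subseteq> T \<union> \<Gamma>"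
  unfolding past_region_def by auto

lemma past_region_v_extent:
  assumes "(s, t) \<in> past_region u0 u v"
  shows "(1 - \<epsilon>) * (M / r\<^sub>0) * (v - t) \<le> r\<^sub>0"
proof -
  define c where "c = (1 - \<epsilon>) * (M / r\<^sub>0)"
  have seg: "\<And>y. t \<le> y \<Longrightarrow> y \<le> v \<Longrightarrow> (s, y) \<in> T \<union> \<Gamma>" and tv: "t \<le> v"
    using assms unfolding past_region_def by auto
  have "r (s, v) + c * v \<le> r (s, t) + c * t"
  proof (rule DERIV_nonpos_imp_nonincreasing[OF tv, where f = "\<lambda>y. r (s, y) + c * y"])
    fix y assume "t \<le> y" "y \<le> v"
    then have yT: "(s, y) \<in> T \<union> \<Gamma>" using seg by blast
    have "((\<lambda>y. r (s, y) + c * y) has_real_derivative dv r (s, y) + c) (at y)"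
      using deriv_r_v[OF mem_D[OF yT]] by (auto intro!: derivative_eq_intros)
    moreover have "dv r (s, y) + c \<le> 0" using dv_r_le[OF yT] unfolding c_def by linarith
    ultimately show "\<exists>z. ((\<lambda>y. r (s, y) + c * y) has_real_derivative z) (at y) \<and> z \<le> 0" by blast
  qed
  moreover have "r (s, t) \<le> r\<^sub>0" "0 < r (s, v)"
    using seg[of t] seg[of v] tv r_le_r\<^sub>0 r_pos mem_D by auto
  ultimately have "c * (v - t) \<le> r\<^sub>0" by (simp add: right_diff_distrib)
  then show ?thesis unfolding c_def .
qed

lemma bounded_past_region: "bounded (past_region u0 u v)"
proof -
  define c where "c = (1 - \<epsilon>) * (M / r\<^sub>0)"
  have c: "c > 0" using \<epsilon>_small M_pos r\<^sub>0_pos unfolding c_def by simp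
  have "past_region u0 u v \<subseteq> {u0..u} \<times> {v - r\<^sub>0 / c..v}"
  proof (rule subsetI)
    fix x assume x: "x \<in> past_region u0 u v"
    obtain s t where st: "x = (s, t)" by (cases x)
    have "c * (v - t) \<le> r\<^sub>0" using past_region_v_extent x st unfolding c_def by simp
    then show "x \<in> {u0..u} \<times> {v - r\<^sub>0 / c..v}"
      using x st c unfolding past_region_def by (auto simp: field_simps)
  qed
  moreover have "bounded ({u0..u} \<times> {v - r\<^sub>0 / c..v})" by (intro bounded_Times) auto
  ultimately show ?thesis using bounded_subset by blast
qed

text \<open>Closedness uses that \<open>\<Gamma>\<close> is where \<open>r = r\<^sub>0\<close> is first reached: just below \<open>\<Gamma>\<close> the
  function \<open>r\<close> exceeds \<open>r\<^sub>0\<close>, so a limit of points of the region cannot lie below \<open>\<Gamma>\<close>.\<close>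
lemma closed_past_region:
  assumes top: "\<And>s. u0 \<le> s \<Longrightarrow> s \<le> u \<Longrightarrow> (s, v) \<in> T \<union> \<Gamma>"
  shows "closed (past_region u0 u v)"
  unfolding closed_sequential_limits
proof (intro allI impI, elim conjE)
  fix X l assume XP: "\<forall>n. X n \<in> past_region u0 u v" and Xl: "X \<longlonglongrightarrow> l"
  obtain s t where l: "l = (s, t)" by (cases l)
  have f1: "(\<lambda>n. fst (X n)) \<longlonglongrightarrow> s" and f2: "(\<lambda>n. snd (X n)) \<longlonglongrightarrow> t"
    using tendsto_fst[OF Xl] tendsto_snd[OF Xl] l by simp_all
  have XP': "u0 \<le> fst (X n) \<and> fst (X n) \<le> u \<and> snd (X n) \<le> v \<and>
      (\<forall>y. snd (X n) \<le> y \<and> y \<le> v \<longrightarrow> (fst (X n), y) \<in> T \<union> \<Gamma>)" for n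
    using XP[rule_format, of n] unfolding past_region_def by (cases "X n") auto
  have s: "u0 \<le> s" "s \<le> u" and tv: "t \<le> v"
    using LIMSEQ_le_const[OF f1] LIMSEQ_le_const2[OF f1] LIMSEQ_le_const2[OF f2] XP' by auto
  obtain v0 where v0: "v0 \<le> v" "(s, v0) \<in> \<Gamma>" "\<And>y. v0 \<le> y \<Longrightarrow> y \<le> v \<Longrightarrow> (s, y) \<in> T \<union> \<Gamma>"
    using past_v_segment[OF top[OF s]] by blast
  have "v0 \<le> t"
  proof (rule ccontr)
    assume "\<not> v0 \<le> t"
    then have "t < v0" by simp
    then obtain \<tau> where \<tau>: "t < \<tau>" "\<tau> < v0" "(s, \<tau>) \<in> D" "r\<^sub>0 < r (s, \<tau>)"
      by (rule r_gt_r\<^sub>0_below_\<Gamma>[OF v0(2)])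
    have "isCont r (s, \<tau>)"
      using differentiable_imp_continuous_on[OF differentiable_r] open_D \<tau>(3)
        continuous_on_eq_continuous_at by blast
    then have "(\<lambda>n. r (fst (X n), \<tau>)) \<longlonglongrightarrow> r (s, \<tau>)"
      by (rule isCont_tendsto_compose) (intro tendsto_intros f1)
    then have "eventually (\<lambda>n. r\<^sub>0 < r (fst (X n), \<tau>)) sequentially"
      using \<tau>(4) order_tendstoD(1) by blast
    moreover have "eventually (\<lambda>n. snd (X n) < \<tau>) sequentially"
      using order_tendstoD(2)[OF f2 \<tau>(1)] .
    ultimately have "eventually (\<lambda>n. False) sequentially"
    proof (rule eventually_elim2)
      fix n assume n: "r\<^sub>0 < r (fst (X n), \<tau>)" "snd (X n) < \<tau>"
      have "(fst (X n), \<tau>) \<in> T \<union> \<Gamma>" using XP'[of n] n(2) \<tau>(2) v0(1) by auto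
      then have "r (fst (X n), \<tau>) \<le> r\<^sub>0" by (rule r_le_r\<^sub>0)
      with n(1) show False by simp
    qed
    then show False by simp
  qed
  then show "l \<in> past_region u0 u v" unfolding past_region_def l using s tv v0(3) by auto
qed

lemma compact_past_region:
  assumes "\<And>s. u0 \<le> s \<Longrightarrow> s \<le> u \<Longrightarrow> (s, v) \<in> T \<union> \<Gamma>"
  shows "compact (past_region u0 u v)"
  using bounded_past_region closed_past_region[OF assms] by (simp add: compact_eq_bounded_closed)

lemma past_region_left_v:
  assumes x: "(s, t) \<in> past_region u0 u v" and T: "(s, t) \<in> T"
  obtains \<delta> where "\<delta> > 0" "\<And>h. 0 < h \<Longrightarrow> h < \<delta> \<Longrightarrow> (s, t - h) \<in> past_region u0 u v"
proof -
  obtain v0 where v0: "v0 \<le> t" "(s, v0) \<in> \<Gamma>" "\<And>y. v0 \<le> y \<Longrightarrow> y \<le> t \<Longrightarrow> (s, y) \<in> T \<union> \<Gamma>"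
    using past_v_segment T by blast
  have "v0 \<noteq> t" using r_on_\<Gamma>[OF v0(2)] r_on_T[OF T] by auto
  then have "t - v0 > 0" using v0(1) by simp
  moreover have "(s, t - h) \<in> past_region u0 u v" if h: "0 < h" "h < t - v0" for h
  proof -
    have "(s, y) \<in> T \<union> \<Gamma>" if "t - h \<le> y" "y \<le> v" for y
    proof (cases "y \<le> t")
      case True
      then show ?thesis using v0(3) that h by simp
    next
      case False
      then show ?thesis using x that unfolding past_region_def by simp
    qed
    then show ?thesis using x h unfolding past_region_def by simp
  qed
  ultimately show ?thesis using that by blast
qed

text \<open>Here the openness of \<open>T\<close> enters: the whole segment from \<open>(s, t)\<close> up to \<open>v\<close> lies in \<open>T\<close>,
  hence so does a tube around it.\<close>
lemma past_region_left_u: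
  assumes x: "(s, t) \<in> past_region u0 u v" and T: "(s, t) \<in> T" and \<Gamma>: "(u0, v) \<in> \<Gamma>"
  obtains \<delta> where "\<delta> > 0" "\<And>h. 0 < h \<Longrightarrow> h < \<delta> \<Longrightarrow> (s - h, t) \<in> past_region u0 u v"
proof -
  have seg: "\<And>y. t \<le> y \<Longrightarrow> y \<le> v \<Longrightarrow> (s, y) \<in> T \<union> \<Gamma>" and tv: "t \<le> v" and s: "u0 \<le> s" "s \<le> u"
    using x unfolding past_region_def by auto
  have r_seg: "r (s, y) < r\<^sub>0" if y: "t \<le> y" "y \<le> v" for y
  proof -
    have "r (s, y) \<le> r (s, t)" by (rule r_antimono_v[OF y(1)]) (use seg y in auto)
    with r_on_T[OF T] show ?thesis by simp
  qed
  have "u0 \<noteq> s" using r_seg[OF tv order_refl] r_on_\<Gamma>[OF \<Gamma>] by auto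
  then have "s - u0 > 0" using s by simp
  have ST: "(\<lambda>y. (s, y)) ` {t..v} \<subseteq> T"
  proof
    fix z assume "z \<in> (\<lambda>y. (s, y)) ` {t..v}"
    then obtain y where y: "t \<le> y" "y \<le> v" "z = (s, y)" by auto
    have "(s, y) \<notin> \<Gamma>" using r_seg[OF y(1,2)] r_on_\<Gamma>[of "(s, y)"] by auto
    then show "z \<in> T" using seg[OF y(1,2)] y(3) by blast
  qed
  have "compact ((\<lambda>y. (s, y)) ` {t..v})"
    by (intro compact_continuous_image continuous_intros) auto
  then obtain e where e: "e > 0" "(\<Union>z\<in>(\<lambda>y. (s, y)) ` {t..v}. ball z e) \<subseteq> T"
    using open_T ST by (rule compact_subset_open_imp_ball_epsilon_subset)
  have "(s - h, t) \<in> past_region u0 u v" if h: "0 < h" "h < min e (s - u0)" for h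
  proof -
    have "(s - h, y) \<in> T" if "t \<le> y" "y \<le> v" for y
    proof -
      have "(s - h, y) \<in> ball (s, y) e" using h by (auto simp: dist_Pair_Pair dist_real_def)
      moreover have "(s, y) \<in> (\<lambda>y. (s, y)) ` {t..v}" using that by simp
      ultimately show ?thesis using e(2) by blast
    qed
    then show ?thesis unfolding past_region_def using h s tv by auto
  qed
  moreover have "min e (s - u0) > 0" using e(1) \<open>s - u0 > 0\<close> by simp
  ultimately show ?thesis using that by blast
qed

lemma K_pos: "K > 0"
  unfolding K_def using \<epsilon>_pos M_pos by simp

text \<open>At an interior maximum of \<open>max |\<alpha>| |\<beta>|\<close> the transport equations make the maximal one of
  \<open>|\<alpha>|\<close>, \<open>|\<beta>|\<close> strictly larger slightly to the past, which is impossible; so the maximum sits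
  on \<open>\<Gamma>\<close>, where both are at most \<open>K\<close>.\<close>
lemma max_\<alpha>_\<beta>_le_K:
  assumes \<Gamma>: "(u0, v) \<in> \<Gamma>" and x: "(s, t) \<in> past_region u0 u v"
    and max: "\<And>y. y \<in> past_region u0 u v \<Longrightarrow> max \<bar>\<alpha> y\<bar> \<bar>\<beta> y\<bar> \<le> max \<bar>\<alpha> (s, t)\<bar> \<bar>\<beta> (s, t)\<bar>"
  shows "max \<bar>\<alpha> (s, t)\<bar> \<bar>\<beta> (s, t)\<bar> \<le> K"
proof (rule ccontr)
  assume gt: "\<not> ?thesis"
  have xT\<Gamma>: "(s, t) \<in> T \<union> \<Gamma>" using x past_region_subset by blast
  have xT: "(s, t) \<in> T" using xT\<Gamma> gt \<alpha>_\<beta>_on_\<Gamma>[of "(s, t)"] by auto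
  have xD: "(s, t) \<in> D" using mem_D[OF xT\<Gamma>] .
  have neg: "du r (s, t) < 0" "dv r (s, t) < 0" using du_dv_r_neg[OF xT\<Gamma>] by auto
  define k where "k = (\<Omega> (s, t))\<^sup>2 / (4 * du r (s, t) * dv r (s, t))"
  have k: "k > 0" unfolding k_def using neg \<Omega>_pos[OF xD] by (simp add: mult_neg_neg)
  have "du r (s, t) / r (s, t) < 0" "dv r (s, t) / r (s, t) < 0"
    using neg r_pos[OF xD] by (simp_all add: divide_neg_pos)
  then consider "\<bar>\<alpha> (s, t)\<bar> = max \<bar>\<alpha> (s, t)\<bar> \<bar>\<beta> (s, t)\<bar>" "dv r (s, t) / r (s, t) < 0"
    | "\<bar>\<beta> (s, t)\<bar> = max \<bar>\<alpha> (s, t)\<bar> \<bar>\<beta> (s, t)\<bar>" "du r (s, t) / r (s, t) < 0"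
    by (cases "\<bar>\<beta> (s, t)\<bar> \<le> \<bar>\<alpha> (s, t)\<bar>") (auto simp: max_def)
  then show False
  proof cases
    case 1
    obtain \<delta> where \<delta>: "\<delta> > 0" "\<And>h. 0 < h \<Longrightarrow> h < \<delta> \<Longrightarrow> (s, t - h) \<in> past_region u0 u v"
      using past_region_left_v[OF x xT] by blast
    obtain h where "0 < h" "h < \<delta>" "\<bar>\<alpha> (s, t)\<bar> < \<bar>\<alpha> (s, t - h)\<bar>"
      using abs_increases_to_the_left[OF \<alpha>_transport[OF xT\<Gamma>, folded k_def] 1(2) k _ _ \<delta>(1)]
        1(1) gt K_pos by fastforce
    then show False using max[OF \<delta>(2)] 1(1) by fastforce
  next
    case 2
    obtain \<delta> where \<delta>: "\<delta> > 0" "\<And>h. 0 < h \<Longrightarrow> h < \<delta> \<Longrightarrow> (s - h, t) \<in> past_region u0 u v"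
      using past_region_left_u[OF x xT \<Gamma>] by blast
    obtain h where "0 < h" "h < \<delta>" "\<bar>\<beta> (s, t)\<bar> < \<bar>\<beta> (s - h, t)\<bar>"
      using abs_increases_to_the_left[OF \<beta>_transport[OF xT\<Gamma>, folded k_def] 2(2) k _ _ \<delta>(1)]
        2(1) gt K_pos by fastforce
    then show False using max[OF \<delta>(2)] 2(1) by fastforce
  qed
qed

lemma \<alpha>_\<beta>_bounded:
  assumes p: "p \<in> T \<union> \<Gamma>"
  shows "\<bar>\<alpha> p\<bar> \<le> K \<and> \<bar>\<beta> p\<bar> \<le> K"
proof -
  obtain u v where puv: "p = (u, v)" by (cases p)
  obtain u0 where u0: "u0 \<le> u" "(u0, v) \<in> \<Gamma>" "\<And>s. u0 \<le> s \<Longrightarrow> s \<le> u \<Longrightarrow> (s, v) \<in> T \<union> \<Gamma>"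
    using past_u_segment p puv by metis
  let ?P = "past_region u0 u v" and ?F = "\<lambda>y. max \<bar>\<alpha> y\<bar> \<bar>\<beta> y\<bar>"
  have "p \<in> ?P" using u0(1) u0(3)[of u] unfolding puv past_region_def by auto
  moreover have "continuous_on ?P ?F"
    using continuous_on_subset[OF continuous_on_\<alpha> past_region_subset]
      continuous_on_subset[OF continuous_on_\<beta> past_region_subset]
    by (intro continuous_intros)
  ultimately obtain x where x: "x \<in> ?P" "\<And>y. y \<in> ?P \<Longrightarrow> ?F y \<le> ?F x"
    using continuous_attains_sup[OF compact_past_region[OF u0(3)]] by blast
  obtain s t where xst: "x = (s, t)" by (cases x)
  have "?F x \<le> K" using max_\<alpha>_\<beta>_le_K[OF u0(2)] x unfolding xst by blast
  then show ?thesis using x(2)[OF \<open>p \<in> ?P\<close>] by linarith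
qed

text \<open>The derivative is \<open>-\<partial>\<^sub>v r/4 \<cdot> (r\<^bsup>K\<^sup>2\<^esup> - 1) + \<partial>\<^sub>v r/r \<cdot> W r\<^bsup>K\<^sup>2\<^esup> (K\<^sup>2 - \<beta>\<^sup>2)\<close>, and both terms are
  nonpositive because \<open>r \<le> 1\<close> and \<open>\<beta>\<^sup>2 \<le> K\<^sup>2\<close>.\<close>
lemma deriv_W_r_powr_nonpos:
  assumes p: "(s, t) \<in> T \<union> \<Gamma>"
  shows "\<exists>z. ((\<lambda>y. W (s, y) * r (s, y) powr K\<^sup>2 + r (s, y) / 4) has_real_derivative z) (at t) \<and> z \<le> 0"
proof -
  have pD: "(s, t) \<in> D" using mem_D[OF p] .
  have rp: "r (s, t) > 0" using r_pos[OF pD] .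
  define R where "R = r (s, t) powr K\<^sup>2"
  have R: "0 < R" "R \<le> 1"
    unfolding R_def using rp r_le_r\<^sub>0[OF p] r\<^sub>0_le_1 by (auto intro!: powr_le1)
  have d: "((\<lambda>y. W (s, y) * r (s, y) powr K\<^sup>2 + r (s, y) / 4) has_real_derivative
      - dv r (s, t) / 4 * (R - 1) + dv r (s, t) / r (s, t) * (W (s, t) * R) * (K\<^sup>2 - (\<beta> (s, t))\<^sup>2)) (at t)"
    by (rule DERIV_cong[OF DERIV_add[OF DERIV_mult[OF W_transport[OF p] DERIV_powr[OF deriv_r_v[OF pD] rp DERIV_const]]
          DERIV_cdivide[OF deriv_r_v[OF pD]]]])
      (use rp in \<open>simp add: R_def field_simps\<close>)
  have dv: "dv r (s, t) < 0" using dv_r_neg[OF p] .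
  have "\<bar>\<beta> (s, t)\<bar>\<^sup>2 \<le> K\<^sup>2" using \<alpha>_\<beta>_bounded[OF p] by (intro power_mono) auto
  then have "(\<beta> (s, t))\<^sup>2 \<le> K\<^sup>2" by simp
  then have "dv r (s, t) / r (s, t) * (W (s, t) * R) * (K\<^sup>2 - (\<beta> (s, t))\<^sup>2) \<le> 0"
    using dv rp W_pos[OF p] R
    by (intro mult_nonpos_nonneg mult_nonneg_nonneg) (auto simp: divide_neg_pos less_imp_le)
  moreover have "- dv r (s, t) / 4 * (R - 1) \<le> 0" using dv R by (intro mult_nonneg_nonpos) auto
  ultimately have "- dv r (s, t) / 4 * (R - 1)
      + dv r (s, t) / r (s, t) * (W (s, t) * R) * (K\<^sup>2 - (\<beta> (s, t))\<^sup>2) \<le> 0" by linarith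
  with d show ?thesis by blast
qed

lemma W_r_powr_le:
  assumes p: "p \<in> T"
  shows "W p * r p powr K\<^sup>2 \<le> M + 1/4"
proof -
  obtain u v where puv: "p = (u, v)" by (cases p)
  obtain v0 where v0: "v0 \<le> v" "(u, v0) \<in> \<Gamma>" "\<And>t. v0 \<le> t \<Longrightarrow> t \<le> v \<Longrightarrow> (u, t) \<in> T \<union> \<Gamma>"
    using past_v_segment p puv by blast
  have "W p * r p powr K\<^sup>2 \<le> W p * r p powr K\<^sup>2 + r p / 4"
    using r_pos[OF mem_D] p by fastforce
  also have "\<dots> \<le> W (u, v0) * r (u, v0) powr K\<^sup>2 + r (u, v0) / 4"
    unfolding puv using v0(3) deriv_W_r_powr_nonpos
    by (intro DERIV_nonpos_imp_nonincreasing[OF v0(1)]) blast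
  also have "\<dots> \<le> M + 1/4"
  proof -
    have "r\<^sub>0 powr K\<^sup>2 \<le> 1" using r\<^sub>0_pos r\<^sub>0_le_1 by (intro powr_le1) auto
    then have "W (u, v0) * r\<^sub>0 powr K\<^sup>2 \<le> W (u, v0)"
      using W_pos[of "(u, v0)"] v0(2) by (intro mult_left_le) auto
    then show ?thesis using W_on_\<Gamma>_le[OF v0(2)] r_on_\<Gamma>[OF v0(2)] r\<^sub>0_le_1 by simp
  qed
  finally show ?thesis .
qed

lemma inverse_\<Omega>_sq_le:
  assumes p: "p \<in> T"
  shows "1 / (\<Omega> p)\<^sup>2 \<le> (2 * (M + 1) / M\<^sup>2) * r p powr (1 - (4 / M\<^sup>2) * \<epsilon>\<^sup>2)"
proof -
  have pT\<Gamma>: "p \<in> T \<union> \<Gamma>" using p by blast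
  have rp: "r p > 0" and \<Omega>p: "\<Omega> p > 0" using r_pos \<Omega>_pos mem_D[OF pT\<Gamma>] by auto
  have neg: "du r p < 0" "dv r p < 0" using du_dv_r_neg[OF pT\<Gamma>] by auto
  define R where "R = r p powr K\<^sup>2"
  have R: "R > 0" unfolding R_def using rp by simp
  define m where "m = (1 - \<epsilon>) * M"
  have m: "m > 0" unfolding m_def using \<epsilon>_small M_pos by simp
  have "m \<le> - (r p * du r p)" "m \<le> - (r p * dv r p)"
    using r_du_r_le[OF pT\<Gamma>] r_dv_r_le[OF pT\<Gamma>] unfolding m_def by linarith+
  then have mm: "m * m \<le> (r p * du r p) * (r p * dv r p)"
    using mult_mono[of m "- (r p * du r p)" m "- (r p * dv r p)"] m by simp
  have "1 / (\<Omega> p)\<^sup>2 = W p * r p / ((r p * du r p) * (r p * dv r p))"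
    unfolding W_def using rp \<Omega>p neg by (simp add: field_simps power2_eq_square)
  also have "\<dots> \<le> W p * r p / (m * m)"
  proof (rule divide_left_mono)
    have "0 < m * m" using m by simp
    then show "0 < (r p * du r p) * (r p * dv r p) * (m * m)" using mm by simp
  qed (use W_pos[OF pT\<Gamma>] rp mm in auto)
  also have "\<dots> \<le> ((M + 1/4) / R) * r p / (m * m)"
    using W_r_powr_le[OF p] R rp m by (intro divide_right_mono mult_right_mono) (auto simp: R_def le_divide_eq)
  also have "\<dots> = ((M + 1/4) / (m * m)) * (r p / R)" by (simp add: field_simps)
  also have "\<dots> \<le> (2 * (M + 1) / M\<^sup>2) * (r p / R)"
  proof (rule mult_right_mono)
    have "1/2 \<le> (1 - \<epsilon>) * (1 - \<epsilon>)"
      using mult_mono[of "9/10" "1 - \<epsilon>" "9/10" "1 - \<epsilon>"] \<epsilon>_small by simp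
    moreover have "m * m = ((1 - \<epsilon>) * (1 - \<epsilon>)) * M\<^sup>2"
      unfolding m_def by (simp add: power2_eq_square)
    ultimately have "M\<^sup>2 / 2 \<le> m * m"
      using mult_right_mono[of "1/2" "(1 - \<epsilon>) * (1 - \<epsilon>)" "M\<^sup>2"] by simp
    then have "(M + 1/4) / (m * m) \<le> (M + 1/4) / (M\<^sup>2 / 2)"
      using M_pos m by (intro divide_left_mono) auto
    also have "\<dots> \<le> 2 * (M + 1) / M\<^sup>2" using M_pos by (simp add: field_simps)
    finally show "(M + 1/4) / (m * m) \<le> 2 * (M + 1) / M\<^sup>2" .
  qed (use rp R in simp)
  also have "r p / R = r p powr (1 - (4 / M\<^sup>2) * \<epsilon>\<^sup>2)"
    unfolding R_def K_def using rp by (simp add: powr_diff power2_eq_square field_simps)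
  finally show ?thesis .
qed

end

theorem mainTheorem14:
  fixes M :: real
  assumes "M > 0"
  shows "\<exists>C c. C > 0 \<and> c > 0 \<and> (\<exists>L0::nat. \<forall>l0\<ge>L0. \<exists>\<epsilon>0>0. \<forall>\<epsilon>. 0 < \<epsilon> \<and> \<epsilon> \<le> \<epsilon>0 \<longrightarrow>
    (\<forall>D r \<Omega> \<phi> U V.
       ES_solution D r \<Omega> \<phi> \<and> trapezoid_geometry D r l0 U V \<and>
       near_schwarzschild_data M \<epsilon> (curve D r l0 U V) r \<Omega> \<phi> \<longrightarrow>
       (\<forall>p\<in>trapezoid D r l0 U V. 1 / (\<Omega> p)\<^sup>2 \<le> C * r p powr (1 - c * \<epsilon>\<^sup>2))))"
proof -
  have "1 / (\<Omega> p)\<^sup>2 \<le> (2 * (M + 1) / M\<^sup>2) * r p powr (1 - (4 / M\<^sup>2) * \<epsilon>\<^sup>2)"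
    if "0 < \<epsilon>" "\<epsilon> \<le> 1/10" "ES_solution D r \<Omega> \<phi>" "trapezoid_geometry D r l0 U V"
      "near_schwarzschild_data M \<epsilon> (curve D r l0 U V) r \<Omega> \<phi>" "p \<in> trapezoid D r l0 U V"
    for l0 \<epsilon> D r \<Omega> \<phi> U V p
  proof -
    interpret near_schwarzschild_trapezoid M \<epsilon> l0 D r \<Omega> \<phi> U V
      using that assms by unfold_locales
    show ?thesis using inverse_\<Omega>_sq_le[OF that(6)] .
  qed
  moreover have "2 * (M + 1) / M\<^sup>2 > 0" "4 / M\<^sup>2 > 0" using assms by auto
  ultimately show ?thesis
    by (intro exI[of _ "2 * (M + 1) / M\<^sup>2"] exI[of _ "4 / M\<^sup>2"] conjI exI[of _ 0]
        allI impI exI[of _ "1/10"]) auto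
qed

end
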